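(* Consider difference logic. Let $G$ be a finite set of difference-logic predicates and let $m$ be the number of variables occurring in $G$. Then $D_T(G) \le \log_2 m$; that is, for every subset $G'\subseteq G$ and every integer $N \ge \log_2 m$, the saturation procedure $\mathrm{Sat}_N(G')$ returns UNSATISFIABLE if and only if $G'$ is unsatisfiable over the reals.
   Context: Difference-logic predicates have the form $x \bowtie y + c$ where $x,y$ are real-valued variables, $\bowtie\in\{<,\le\}$ and $c$ is a real constant. The inference rules are: (a) from $X \le Z + C$ and $Z \bowtie Y + D$ derive $X \bowtie Y + (C+D)$; (b) from $X < Z + C$ and $Z \bowtie Y + D$ derive $X < Y + (C+D)$; (c) from $X < Y + C$ and $Y \bowtie X + D$ with $C+D \le 0$ derive $\bot$; (d) from $X \le Y + C$ and $Y \le X + D$ with $C + D < 0$ derive $\bot$; (e) from $X \le Y$ and $Y \le X$ derive $X = Y$. Saturation procedure $\mathrm{Sat}_N(H)$: (1) $W := H$. (2) Repeat $N$ times: $W' := W$; for every predicate $g\notin W'$ derivable in one rule application from predicates all in $W'$, add $g$ to $W$. (3) Return UNSATISFIABLE if $\bot$ is derivable in one rule application from predicates in $W$, else SATISFIABLE. $D_T(G)$ denotes the maximum over $G'\subseteq G$ of the least number $d$ such that $\mathrm{Sat}_N(G')$ correctly decides satisfiability of $G'$ for all $N\ge d$. *)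

theory Defs
  imports Complex_Main
begin

text \<open>Difference-logic atoms over variables of type 'v.
  DLe x y c  is  x \<le> y + c ;  DLt x y c  is  x < y + c ;
  DEq x y  is  x = y  (only produced by rule (e)).\<close>
datatype 'v dl = DLe 'v 'v real | DLt 'v 'v real | DEq 'v 'v

fun is_diff_pred :: "'v dl \<Rightarrow> bool" where
  "is_diff_pred (DEq _ _) = False"
| "is_diff_pred _ = True"

fun holds :: "('v \<Rightarrow> real) \<Rightarrow> 'v dl \<Rightarrow> bool" where
  "holds \<rho> (DLe x y c) = (\<rho> x \<le> \<rho> y + c)"
| "holds \<rho> (DLt x y c) = (\<rho> x < \<rho> y + c)"
| "holds \<rho> (DEq x y) = (\<rho> x = \<rho> y)"

definition satisfiable :: "'v dl set \<Rightarrow> bool" where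
  "satisfiable H \<longleftrightarrow> (\<exists>\<rho>::'v \<Rightarrow> real. \<forall>g\<in>H. holds \<rho> g)"

fun vars_dl :: "'v dl \<Rightarrow> 'v set" where
  "vars_dl (DLe x y _) = {x, y}"
| "vars_dl (DLt x y _) = {x, y}"
| "vars_dl (DEq x y) = {x, y}"

definition vars_set :: "'v dl set \<Rightarrow> 'v set" where
  "vars_set H = (\<Union>g\<in>H. vars_dl g)"

inductive derive1 :: "'v dl set \<Rightarrow> 'v dl \<Rightarrow> bool" for W where
  rule_a_le: "\<lbrakk>DLe x z c \<in> W; DLe z y d \<in> W\<rbrakk> \<Longrightarrow> derive1 W (DLe x y (c + d))"
| rule_a_lt: "\<lbrakk>DLe x z c \<in> W; DLt z y d \<in> W\<rbrakk> \<Longrightarrow> derive1 W (DLt x y (c + d))"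
| rule_b_le: "\<lbrakk>DLt x z c \<in> W; DLe z y d \<in> W\<rbrakk> \<Longrightarrow> derive1 W (DLt x y (c + d))"
| rule_b_lt: "\<lbrakk>DLt x z c \<in> W; DLt z y d \<in> W\<rbrakk> \<Longrightarrow> derive1 W (DLt x y (c + d))"
| rule_e: "\<lbrakk>DLe x y 0 \<in> W; DLe y x 0 \<in> W\<rbrakk> \<Longrightarrow> derive1 W (DEq x y)"

text \<open>\<bottom> derivable in one application of rules (c), (d) from W.\<close>
definition derive_bot :: "'v dl set \<Rightarrow> bool" where
  "derive_bot W \<longleftrightarrow>
     (\<exists>x y c d. DLt x y c \<in> W \<and> (DLe y x d \<in> W \<or> DLt y x d \<in> W) \<and> c + d \<le> 0)
   \<or> (\<exists>x y c d. DLe x y c \<in> W \<and> DLe y x d \<in> W \<and> c + d < 0)"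

definition sat_step :: "'v dl set \<Rightarrow> 'v dl set" where
  "sat_step W = W \<union> {g. derive1 W g}"

text \<open>Sat_N(H) returns UNSATISFIABLE iff this is True.\<close>
definition Sat_unsat :: "nat \<Rightarrow> 'v dl set \<Rightarrow> bool" where
  "Sat_unsat N H \<longleftrightarrow> derive_bot ((sat_step ^^ N) H)"

end

theory Submission
  imports Defs
begin

text \<open>Read a predicate \<open>x \<bowtie> y + c\<close> as an edge from \<open>x\<close> to \<open>y\<close> of weight \<open>c\<close>, strict
  when \<open>\<bowtie>\<close> is \<open><\<close>. Rules (a) and (b) compose adjacent edges, so after \<open>N\<close> rounds every
  walk of at most \<open>2^N\<close> edges has been composed into a single predicate; rules (c) and (d)
  detect an infeasible cycle: a closed walk whose weight is negative, or zero with a strict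
  edge. Conversely, a set without infeasible cycles is satisfiable: eliminating one variable
  in Fourier--Motzkin style (composing each edge into it with each edge out of it) preserves
  the absence of such cycles,
  and any solution of the reduced set extends, since the lower bounds that the remaining
  edges impose on the eliminated variable never exceed its upper bounds. Finally, a shortest
  infeasible cycle visits no variable twice, so it has at most \<open>m \<le> 2^N\<close> edges.\<close>

fun dl_src :: "'v dl \<Rightarrow> 'v" where
  "dl_src (DLe x y c) = x" | "dl_src (DLt x y c) = x" | "dl_src (DEq x y) = x"

fun dl_dst :: "'v dl \<Rightarrow> 'v" where
  "dl_dst (DLe x y c) = y" | "dl_dst (DLt x y c) = y" | "dl_dst (DEq x y) = y"

fun dl_weight :: "'v dl \<Rightarrow> real" where
  "dl_weight (DLe x y c) = c" | "dl_weight (DLt x y c) = c" | "dl_weight (DEq x y) = 0"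

fun dl_strict :: "'v dl \<Rightarrow> bool" where
  "dl_strict (DLt x y c) = True" | "dl_strict (DLe x y c) = False" | "dl_strict (DEq x y) = False"

definition dl_atom :: "'v \<Rightarrow> 'v \<Rightarrow> real \<Rightarrow> bool \<Rightarrow> 'v dl" where
  "dl_atom x y c s = (if s then DLt x y c else DLe x y c)"

definition dl_comp :: "'v dl \<Rightarrow> 'v dl \<Rightarrow> 'v dl" where
  "dl_comp a b = dl_atom (dl_src a) (dl_dst b) (dl_weight a + dl_weight b) (dl_strict a \<or> dl_strict b)"

lemma dl_atom_simps [simp]:
  "is_diff_pred (dl_atom x y c s)" "dl_src (dl_atom x y c s) = x" "dl_dst (dl_atom x y c s) = y"
  "dl_weight (dl_atom x y c s) = c" "dl_strict (dl_atom x y c s) = s"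
  by (auto simp: dl_atom_def)

lemma dl_atom_eq_self:
  "is_diff_pred a \<Longrightarrow> dl_atom (dl_src a) (dl_dst a) (dl_weight a) (dl_strict a) = a"
  by (cases a) (auto simp: dl_atom_def)

lemma vars_dl_eq: "vars_dl a = {dl_src a, dl_dst a}"
  by (cases a) auto

lemma finite_vars_set: "finite S \<Longrightarrow> finite (vars_set S)"
  by (auto simp: vars_set_def vars_dl_eq)

lemma holds_dl_atom:
  "holds \<rho> (dl_atom x y c s) \<longleftrightarrow> (if s then \<rho> x < \<rho> y + c else \<rho> x \<le> \<rho> y + c)"
  by (simp add: dl_atom_def)

lemma holds_diff_pred:
  "is_diff_pred a \<Longrightarrow> holds \<rho> a \<longleftrightarrow>
     (if dl_strict a then \<rho> (dl_src a) < \<rho> (dl_dst a) + dl_weight a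
      else \<rho> (dl_src a) \<le> \<rho> (dl_dst a) + dl_weight a)"
  by (cases a) auto

lemma holds_cong: "(\<And>v. v \<in> vars_dl a \<Longrightarrow> \<rho> v = \<rho>' v) \<Longrightarrow> holds \<rho> a \<longleftrightarrow> holds \<rho>' a"
  by (cases a) auto

section \<open>Soundness\<close>

lemma derive1_sound:
  assumes "derive1 W g" "\<forall>a\<in>W. holds \<rho> a"
  shows "holds \<rho> g"
  using assms(1) by cases (auto dest!: assms(2)[rule_format])

lemma sat_step_iterate_sound: "\<forall>a\<in>H. holds \<rho> a \<Longrightarrow> \<forall>a\<in>(sat_step ^^ N) H. holds \<rho> a"
  by (induction N) (auto simp: sat_step_def intro: derive1_sound)

lemma derive_bot_unsat:
  assumes "derive_bot W"
  shows "\<not> (\<forall>a\<in>W. holds \<rho> a)"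
proof
  assume sat: "\<forall>a\<in>W. holds \<rho> a"
  with assms show False
    unfolding derive_bot_def by (auto dest!: sat[rule_format])
qed

section \<open>Saturation composes walks\<close>

lemma derive1_dl_comp:
  assumes "a \<in> W" "b \<in> W" "is_diff_pred a" "is_diff_pred b" "dl_dst a = dl_src b"
  shows "derive1 W (dl_comp a b)"
  using assms by (cases a; cases b) (auto simp: dl_comp_def dl_atom_def intro: derive1.intros)

lemma sat_step_iterate_mono: "m \<le> n \<Longrightarrow> (sat_step ^^ m) H \<subseteq> (sat_step ^^ n) H"
  by (induction n) (auto simp: sat_step_def le_Suc_eq)

abbreviation dl_walk :: "'v dl list \<Rightarrow> bool" where
  "dl_walk \<equiv> successively (\<lambda>a b. dl_dst a = dl_src b)"

definition walk_in :: "'v dl set \<Rightarrow> 'v dl list \<Rightarrow> bool" where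
  "walk_in S ws \<longleftrightarrow> ws \<noteq> [] \<and> dl_walk ws \<and> set ws \<subseteq> S"

definition walk_weight :: "'v dl list \<Rightarrow> real" where
  "walk_weight ws = sum_list (map dl_weight ws)"

definition walk_collapse :: "'v dl list \<Rightarrow> 'v dl" where
  "walk_collapse ws =
     dl_atom (dl_src (hd ws)) (dl_dst (last ws)) (walk_weight ws) (\<exists>a\<in>set ws. dl_strict a)"

lemma walk_collapse_simps [simp]:
  "is_diff_pred (walk_collapse ws)" "dl_src (walk_collapse ws) = dl_src (hd ws)"
  "dl_dst (walk_collapse ws) = dl_dst (last ws)"
  by (simp_all add: walk_collapse_def)

lemma walk_collapse_singleton: "is_diff_pred a \<Longrightarrow> walk_collapse [a] = a"
  by (simp add: walk_collapse_def walk_weight_def dl_atom_eq_self)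

lemma walk_collapse_append:
  "xs \<noteq> [] \<Longrightarrow> ys \<noteq> [] \<Longrightarrow> walk_collapse (xs @ ys) = dl_comp (walk_collapse xs) (walk_collapse ys)"
  by (simp add: walk_collapse_def dl_comp_def walk_weight_def bex_Un)

lemma walk_in_append:
  "walk_in S xs \<Longrightarrow> walk_in S ys \<Longrightarrow> dl_dst (last xs) = dl_src (hd ys) \<Longrightarrow> walk_in S (xs @ ys)"
  by (auto simp: walk_in_def successively_append_iff)

lemma walk_collapse_in_sat_step_iterate:
  assumes "walk_in H ws" "\<forall>a\<in>H. is_diff_pred a" "length ws \<le> 2 ^ N"
  shows "walk_collapse ws \<in> (sat_step ^^ N) H"
  using assms(1,3)
proof (induction N arbitrary: ws)
  case 0
  then obtain a where "ws = [a]" "a \<in> H"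
    by (cases ws) (auto simp: walk_in_def)
  then show ?case using assms(2) by (simp add: walk_collapse_singleton)
next
  case (Suc N)
  show ?case
  proof (cases "length ws \<le> 2 ^ N")
    case True
    then show ?thesis
      using Suc sat_step_iterate_mono[of N "Suc N"] by auto
  next
    case False
    define xs ys where "xs = take (2 ^ N) ws" and "ys = drop (2 ^ N) ws"
    have ws: "ws = xs @ ys" by (simp add: xs_def ys_def)
    have "xs \<noteq> []" "ys \<noteq> []" "length xs \<le> 2 ^ N" "length ys \<le> 2 ^ N"
      using False Suc.prems(2) by (auto simp: xs_def ys_def)
    moreover have "walk_in H xs" "walk_in H ys" "dl_dst (last xs) = dl_src (hd ys)"
      using Suc.prems(1) \<open>xs \<noteq> []\<close> \<open>ys \<noteq> []\<close>
      by (auto simp: ws walk_in_def successively_append_iff)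
    ultimately have "walk_collapse xs \<in> (sat_step ^^ N) H" "walk_collapse ys \<in> (sat_step ^^ N) H"
      using Suc.IH by auto
    then have "derive1 ((sat_step ^^ N) H) (dl_comp (walk_collapse xs) (walk_collapse ys))"
      using \<open>dl_dst (last xs) = dl_src (hd ys)\<close>
      by (intro derive1_dl_comp) (auto simp: walk_collapse_def)
    then show ?thesis
      using \<open>xs \<noteq> []\<close> \<open>ys \<noteq> []\<close> unfolding sat_step_def by (simp add: ws walk_collapse_append)
  qed
qed

section \<open>Infeasible cycles\<close>

definition infeasible_loop :: "'v dl \<Rightarrow> bool" where
  "infeasible_loop a \<longleftrightarrow>
     dl_src a = dl_dst a \<and> (dl_weight a < 0 \<or> dl_weight a = 0 \<and> dl_strict a)"

definition infeasible_cycle :: "'v dl set \<Rightarrow> 'v dl list \<Rightarrow> bool" where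
  "infeasible_cycle S ws \<longleftrightarrow> walk_in S ws \<and> infeasible_loop (walk_collapse ws)"

lemma infeasible_loop_walk_collapse:
  "infeasible_loop (walk_collapse ws) \<longleftrightarrow> dl_src (hd ws) = dl_dst (last ws) \<and>
     (walk_weight ws < 0 \<or> walk_weight ws = 0 \<and> (\<exists>a\<in>set ws. dl_strict a))"
  by (simp add: infeasible_loop_def walk_collapse_def)

lemma derive_bot_if_infeasible_loop:
  "a \<in> W \<Longrightarrow> is_diff_pred a \<Longrightarrow> infeasible_loop a \<Longrightarrow> derive_bot W"
  by (cases a) (force simp: derive_bot_def infeasible_loop_def)+

lemma infeasible_cycle_detected:
  assumes "infeasible_cycle H ws" "\<forall>a\<in>H. is_diff_pred a" "length ws \<le> 2 ^ N"
  shows "derive_bot ((sat_step ^^ N) H)"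
proof (rule derive_bot_if_infeasible_loop)
  show "walk_collapse ws \<in> (sat_step ^^ N) H"
    using assms by (intro walk_collapse_in_sat_step_iterate) (auto simp: infeasible_cycle_def)
  show "is_diff_pred (walk_collapse ws)" "infeasible_loop (walk_collapse ws)"
    using assms(1) by (auto simp: walk_collapse_def infeasible_cycle_def)
qed

lemma not_distinct_map_decomp:
  "\<not> distinct (map f xs) \<Longrightarrow> \<exists>as a bs b cs. xs = as @ a # bs @ b # cs \<and> f a = f b"
  by (auto dest!: not_distinct_decomp simp: map_eq_append_conv append_eq_map_conv Cons_eq_map_conv) blast

lemma infeasible_cycle_split:
  assumes "infeasible_cycle S (as @ a # bs @ b # cs)" "dl_src a = dl_src b"
  shows "infeasible_cycle S (a # bs) \<or> infeasible_cycle S (as @ b # cs)"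
proof -
  have "walk_in S (a # bs)" "dl_src (hd (a # bs)) = dl_dst (last (a # bs))"
    "walk_in S (as @ b # cs)" "dl_src (hd (as @ b # cs)) = dl_dst (last (as @ b # cs))"
    using assms
    by (auto simp: infeasible_cycle_def walk_in_def infeasible_loop_walk_collapse
        successively_append_iff successively_Cons hd_append split: if_splits)
  moreover have "walk_weight (as @ a # bs @ b # cs) = walk_weight (a # bs) + walk_weight (as @ b # cs)"
    by (simp add: walk_weight_def)
  ultimately show ?thesis
    using assms(1) by (auto simp: infeasible_cycle_def infeasible_loop_walk_collapse)
qed

lemma infeasible_cycle_shorten:
  assumes "finite S" "infeasible_cycle S ws"
  shows "\<exists>ws'. infeasible_cycle S ws' \<and> length ws' \<le> card (vars_set S)"
  using assms(2)
proof (induction "length ws" arbitrary: ws rule: less_induct)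
  case less
  show ?case
  proof (cases "length ws \<le> card (vars_set S)")
    case True
    with less.prems show ?thesis by blast
  next
    case False
    have "set (map dl_src ws) \<subseteq> vars_set S"
      using less.prems by (auto simp: infeasible_cycle_def walk_in_def vars_set_def vars_dl_eq)
    then have "card (set (map dl_src ws)) \<le> card (vars_set S)"
      using card_mono finite_vars_set[OF assms(1)] by blast
    then have "\<not> distinct (map dl_src ws)"
      using False distinct_card[of "map dl_src ws"] by auto
    then obtain as a bs b cs where ws: "ws = as @ a # bs @ b # cs" and "dl_src a = dl_src b"
      using not_distinct_map_decomp by blast
    then have "infeasible_cycle S (a # bs) \<or> infeasible_cycle S (as @ b # cs)"
      using infeasible_cycle_split less.prems by blast
    moreover have "length (a # bs) < length ws" "length (as @ b # cs) < length ws"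
      using ws by auto
    ultimately show ?thesis
      using less.hyps by blast
  qed
qed

section \<open>Fourier--Motzkin elimination\<close>

lemma exists_between_bounds:
  fixes lo :: "'a \<Rightarrow> real" and up :: "'b \<Rightarrow> real"
  assumes "finite A" "finite B"
    and compatible: "\<And>a b. a \<in> A \<Longrightarrow> b \<in> B \<Longrightarrow> lo a \<le> up b \<and> (sl a \<or> su b \<longrightarrow> lo a < up b)"
  obtains t where "\<And>a. a \<in> A \<Longrightarrow> lo a \<le> t \<and> (sl a \<longrightarrow> lo a < t)"
    and "\<And>b. b \<in> B \<Longrightarrow> t \<le> up b \<and> (su b \<longrightarrow> t < up b)"
proof (cases "A = {} \<or> B = {}")
  case True
  obtain m where m: "\<forall>x\<in>up ` B. m \<le> x"
    using bdd_below_finite[of "up ` B"] assms(2) unfolding bdd_below_def by blast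
  obtain M where M: "\<forall>x\<in>lo ` A. x \<le> M"
    using bdd_above_finite[of "lo ` A"] assms(1) unfolding bdd_above_def by blast
  show ?thesis
  proof (cases "A = {}")
    case True
    with m show ?thesis by (intro that[of "m - 1"]) force+
  next
    case False
    with \<open>A = {} \<or> B = {}\<close> M show ?thesis by (intro that[of "M + 1"]) force+
  qed
next
  case False
  obtain a0 where a0: "a0 \<in> A" "lo a0 = Max (lo ` A)"
    using Max_in[OF finite_imageI[OF assms(1)]] False by (metis image_iff image_is_empty)
  obtain b0 where b0: "b0 \<in> B" "up b0 = Min (up ` B)"
    using Min_in[OF finite_imageI[OF assms(2)]] False by (metis image_iff image_is_empty)
  have le_a0: "lo a \<le> lo a0" if "a \<in> A" for a
    using a0 that assms(1) by simp
  have ge_b0: "up b0 \<le> up b" if "b \<in> B" for b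
    using b0 that assms(2) by simp
  have "lo a0 \<le> up b0"
    using compatible[OF a0(1) b0(1)] by simp
  show ?thesis
  proof (rule that[of "(lo a0 + up b0) / 2"])
    fix a assume "a \<in> A"
    with le_a0 compatible[OF _ b0(1)]
    have "lo a \<le> lo a0" "lo a \<le> up b0" "sl a \<longrightarrow> lo a < up b0" by auto
    with \<open>lo a0 \<le> up b0\<close> show "lo a \<le> (lo a0 + up b0) / 2 \<and> (sl a \<longrightarrow> lo a < (lo a0 + up b0) / 2)"
      by auto
  next
    fix b assume "b \<in> B"
    with ge_b0 compatible[OF a0(1)]
    have "up b0 \<le> up b" "lo a0 \<le> up b" "su b \<longrightarrow> lo a0 < up b" by auto
    with \<open>lo a0 \<le> up b0\<close> show "(lo a0 + up b0) / 2 \<le> up b \<and> (su b \<longrightarrow> (lo a0 + up b0) / 2 < up b)"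
      by auto
  qed
qed

definition edges_into :: "'v \<Rightarrow> 'v dl set \<Rightarrow> 'v dl set" where
  "edges_into z S = {a \<in> S. dl_dst a = z \<and> dl_src a \<noteq> z}"

definition edges_out_of :: "'v \<Rightarrow> 'v dl set \<Rightarrow> 'v dl set" where
  "edges_out_of z S = {b \<in> S. dl_src b = z \<and> dl_dst b \<noteq> z}"

text \<open>Loops at \<open>z\<close> are dropped; they constrain nothing unless they are infeasible.\<close>

definition eliminate :: "'v \<Rightarrow> 'v dl set \<Rightarrow> 'v dl set" where
  "eliminate z S = {a \<in> S. z \<notin> vars_dl a} \<union> case_prod dl_comp ` (edges_into z S \<times> edges_out_of z S)"

lemma finite_eliminate: "finite S \<Longrightarrow> finite (eliminate z S)"
  by (simp add: eliminate_def edges_into_def edges_out_of_def)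

lemma vars_set_eliminate: "vars_set (eliminate z S) \<subseteq> vars_set S - {z}"
  by (auto simp: eliminate_def edges_into_def edges_out_of_def vars_set_def vars_dl_eq dl_comp_def)

lemma eliminate_diff_preds: "\<forall>a\<in>S. is_diff_pred a \<Longrightarrow> \<forall>a\<in>eliminate z S. is_diff_pred a"
  by (auto simp: eliminate_def dl_comp_def)

lemma collapse_of_collapses:
  assumes "walk_in T ws" "\<And>e. e \<in> T \<Longrightarrow> \<exists>ps. walk_in S ps \<and> walk_collapse ps = e"
  shows "\<exists>ps. walk_in S ps \<and> walk_collapse ps = walk_collapse ws"
  using assms(1)
proof (induction ws)
  case Nil
  then show ?case by (simp add: walk_in_def)
next
  case (Cons e ws)
  obtain ps where ps: "walk_in S ps" "walk_collapse ps = e"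
    using Cons.prems assms(2) by (auto simp: walk_in_def)
  show ?case
  proof (cases "ws = []")
    case True
    with ps show ?thesis
      by (metis walk_collapse_simps(1) walk_collapse_singleton)
  next
    case False
    then have "walk_in T ws" "dl_dst e = dl_src (hd ws)"
      using Cons.prems by (auto simp: walk_in_def successively_Cons)
    then obtain qs where qs: "walk_in S qs" "walk_collapse qs = walk_collapse ws"
      using Cons.IH by blast
    have "walk_in S (ps @ qs)"
      using ps qs \<open>dl_dst e = dl_src (hd ws)\<close>
      by (metis walk_in_append walk_collapse_simps(2,3))
    moreover have "walk_collapse (ps @ qs) = walk_collapse (e # ws)"
    proof -
      have "walk_collapse (e # ws) = dl_comp (walk_collapse [e]) (walk_collapse ws)"
        using walk_collapse_append[of "[e]" ws] False by simp
      moreover have "walk_collapse [e] = e"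
        using ps(2) by (metis walk_collapse_simps(1) walk_collapse_singleton)
      ultimately show ?thesis
        using ps qs by (simp add: walk_collapse_append walk_in_def)
    qed
    ultimately show ?thesis by blast
  qed
qed

lemma infeasible_cycle_eliminate:
  assumes "infeasible_cycle (eliminate z S) ws" "\<forall>a\<in>S. is_diff_pred a"
  shows "\<exists>ps. infeasible_cycle S ps"
proof -
  have "\<exists>ps. walk_in S ps \<and> walk_collapse ps = e" if e: "e \<in> eliminate z S" for e
  proof -
    consider "e \<in> S" | a b where "a \<in> S" "b \<in> S" "dl_dst a = dl_src b" "e = dl_comp a b"
      using e by (auto simp: eliminate_def edges_into_def edges_out_of_def)
    then show ?thesis
    proof cases
      case 1
      then have "walk_in S [e] \<and> walk_collapse [e] = e"
        using assms(2) by (simp add: walk_in_def walk_collapse_singleton)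
      then show ?thesis by blast
    next
      case 2
      then have "walk_in S [a, b] \<and> walk_collapse [a, b] = e"
        using walk_collapse_append[of "[a]" "[b]"] assms(2)
        by (simp add: walk_in_def walk_collapse_singleton)
      then show ?thesis by blast
    qed
  qed
  then show ?thesis
    using collapse_of_collapses[of "eliminate z S" ws S] assms(1)
    by (metis infeasible_cycle_def)
qed

lemma holds_feasible_loop:
  "is_diff_pred a \<Longrightarrow> dl_src a = dl_dst a \<Longrightarrow> \<not> infeasible_loop a \<Longrightarrow> holds \<rho> a"
  by (auto simp: holds_diff_pred infeasible_loop_def)

lemma eliminate_solution_extends:
  assumes "finite S" "\<forall>a\<in>S. is_diff_pred a" "\<forall>a\<in>S. \<not> infeasible_loop a"
    and sol: "\<forall>g\<in>eliminate z S. holds \<rho> g"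
  obtains t where "\<forall>a\<in>S. holds (\<rho>(z := t)) a"
proof -
  let ?lo = "\<lambda>a. \<rho> (dl_src a) - dl_weight a" and ?up = "\<lambda>b. \<rho> (dl_dst b) + dl_weight b"
  have compatible: "?lo a \<le> ?up b \<and> (dl_strict a \<or> dl_strict b \<longrightarrow> ?lo a < ?up b)"
    if "a \<in> edges_into z S" "b \<in> edges_out_of z S" for a b
  proof -
    have "dl_comp a b \<in> eliminate z S"
      using that unfolding eliminate_def by (intro UnI2 image_eqI[of _ _ "(a, b)"]) auto
    then have "holds \<rho> (dl_comp a b)"
      using sol by blast
    then show ?thesis
      by (auto simp: dl_comp_def holds_dl_atom split: if_splits)
  qed
  have fin: "finite (edges_into z S)" "finite (edges_out_of z S)"
    using assms(1) by (simp_all add: edges_into_def edges_out_of_def)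
  obtain t where
    lo: "\<And>a. a \<in> edges_into z S \<Longrightarrow> ?lo a \<le> t \<and> (dl_strict a \<longrightarrow> ?lo a < t)" and
    up: "\<And>b. b \<in> edges_out_of z S \<Longrightarrow> t \<le> ?up b \<and> (dl_strict b \<longrightarrow> t < ?up b)"
    using exists_between_bounds[where lo = ?lo and up = ?up and sl = dl_strict and su = dl_strict,
        OF fin compatible] by blast
  have "holds (\<rho>(z := t)) a" if "a \<in> S" for a
  proof -
    consider "z \<notin> vars_dl a" | "dl_src a = dl_dst a" | "a \<in> edges_into z S" | "a \<in> edges_out_of z S"
      using \<open>a \<in> S\<close> by (cases "dl_src a = z"; cases "dl_dst a = z")
        (auto simp: vars_dl_eq edges_into_def edges_out_of_def)
    then show ?thesis
    proof cases
      case 1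
      then have "holds \<rho> a"
        using sol that by (simp add: eliminate_def)
      with 1 show ?thesis
        by (subst holds_cong[where \<rho>' = \<rho>]) auto
    next
      case 2
      with that assms(2,3) show ?thesis by (simp add: holds_feasible_loop)
    next
      case 3
      with lo[OF 3] that assms(2) show ?thesis
        by (auto simp: holds_diff_pred edges_into_def)
    next
      case 4
      with up[OF 4] that assms(2) show ?thesis
        by (auto simp: holds_diff_pred edges_out_of_def)
    qed
  qed
  then show ?thesis using that by blast
qed

lemma satisfiable_if_no_infeasible_cycle:
  assumes "finite S" "\<forall>a\<in>S. is_diff_pred a" "\<nexists>ws. infeasible_cycle S ws"
  shows "satisfiable S"
  using assms
proof (induction "card (vars_set S)" arbitrary: S rule: less_induct)
  case less
  show ?case
  proof (cases "vars_set S = {}")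
    case True
    then have "S = {}" by (auto simp: vars_set_def vars_dl_eq)
    then show ?thesis by (simp add: satisfiable_def)
  next
    case False
    then obtain z where z: "z \<in> vars_set S" by blast
    have fewer_vars: "card (vars_set (eliminate z S)) < card (vars_set S)"
      using vars_set_eliminate[of z S] z
      by (intro psubset_card_mono finite_vars_set less.prems(1)) auto
    have no_cycle: "\<nexists>ws. infeasible_cycle (eliminate z S) ws"
      using infeasible_cycle_eliminate[OF _ less.prems(2)] less.prems(3) by blast
    obtain \<rho> where \<rho>: "\<forall>g\<in>eliminate z S. holds \<rho> g"
      using less.hyps[OF fewer_vars finite_eliminate[OF less.prems(1)]
          eliminate_diff_preds[OF less.prems(2)] no_cycle]
      by (auto simp: satisfiable_def)
    have "\<forall>a\<in>S. \<not> infeasible_loop a"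
    proof (intro ballI notI)
      fix a assume "a \<in> S" "infeasible_loop a"
      then have "infeasible_cycle S [a]"
        using less.prems(2) by (simp add: infeasible_cycle_def walk_in_def walk_collapse_singleton)
      with less.prems(3) show False by blast
    qed
    then obtain t where "\<forall>a\<in>S. holds (\<rho>(z := t)) a"
      using eliminate_solution_extends[OF less.prems(1,2) _ \<rho>] by blast
    then show ?thesis by (auto simp: satisfiable_def)
  qed
qed

lemma Sat_unsat_iff_unsatisfiable:
  assumes "finite H" "\<forall>a\<in>H. is_diff_pred a" "card (vars_set H) \<le> 2 ^ N"
  shows "Sat_unsat N H \<longleftrightarrow> \<not> satisfiable H"
proof
  assume "Sat_unsat N H"
  then show "\<not> satisfiable H"
    using derive_bot_unsat sat_step_iterate_sound by (fastforce simp: Sat_unsat_def satisfiable_def)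
next
  assume "\<not> satisfiable H"
  then obtain ws where "infeasible_cycle H ws"
    using satisfiable_if_no_infeasible_cycle assms(1,2) by blast
  then obtain ws' where "infeasible_cycle H ws'" "length ws' \<le> card (vars_set H)"
    using infeasible_cycle_shorten assms(1) by blast
  then show "Sat_unsat N H"
    unfolding Sat_unsat_def using assms(2,3) by (intro infeasible_cycle_detected) auto
qed

lemma le_two_power_if_log_le: "log 2 (real m) \<le> real N \<Longrightarrow> m \<le> 2 ^ N"
proof (cases "m = 0")
  case False
  assume "log 2 (real m) \<le> real N"
  with False have "real m \<le> 2 powr real N"
    by (simp add: log_le_iff)
  then show ?thesis
    by (simp add: powr_realpow flip: of_nat_le_iff)
qed simp

theorem proposition3p11:
  fixes G :: "'v dl set"
  assumes "finite G"
    and "\<forall>g\<in>G. is_diff_pred g"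
  shows "\<forall>G' \<subseteq> G. \<forall>N::nat. real N \<ge> log 2 (real (card (vars_set G))) \<longrightarrow>
           (Sat_unsat N G' \<longleftrightarrow> \<not> satisfiable G')"
proof (intro allI impI)
  fix G' :: "'v dl set" and N :: nat
  assume "G' \<subseteq> G" and "log 2 (real (card (vars_set G))) \<le> real N"
  have "card (vars_set G') \<le> card (vars_set G)"
    using \<open>G' \<subseteq> G\<close> by (intro card_mono finite_vars_set assms(1)) (auto simp: vars_set_def)
  also have "\<dots> \<le> 2 ^ N"
    using \<open>log 2 (real (card (vars_set G))) \<le> real N\<close> by (rule le_two_power_if_log_le)
  finally show "Sat_unsat N G' \<longleftrightarrow> \<not> satisfiable G'"
    using \<open>G' \<subseteq> G\<close> assms by (intro Sat_unsat_iff_unsatisfiable) (auto intro: finite_subset)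
qed

end
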